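(* In the private bug bounty model with a single artificial bug described in the context, define $$\Omega(\hat c)=\sum_l w^l\mu^lq^l\big(1-q^lF(\hat c)\big)^{n-1}-\frac{F(\hat c)}{f(\hat c)}$$ and let $\tilde c$ be its unique fixed point. Then the optimal equilibrium threshold, i.e. the maximizer of $$W(\hat c)=\sum_l w^l\mu^lP(\hat c;q^l)-nF(\hat c)\hat c$$ over the set $C(\overline v)=[0,c_a(\overline v)]$ of achievable equilibrium thresholds, is $\hat c^*=\min\{\tilde c,c_a(\overline v)\}$. Moreover, any prizes $\boldsymbol v^*$, $v_a^*$ and complexity $q_a^*$ (satisfying the budget and sign constraints) that solve $\hat c^*=\Psi(\hat c^*;\boldsymbol v,v_a,q_a)$ are optimal for the designer's problem.
   Context: Private bug bounty model. There are $L$ potential organic bugs; bug $l$ exists with probability $\mu^l\in(0,1]$ (independently), has complexity $q^l\in(0,1]$, and the designer values finding it at $w^l\ge0$. There are $n$ risk-neutral agents with private search costs drawn i.i.d. from a distribution $F$ with support $[\underline c,\overline c]$ ($-\infty\le\underline c<\overline c\le\infty$, $\overline c>0$), continuous with full support, finite density $f$, and $F/f$ non-decreasing. The designer has budget $\overline v>0$, sets prizes $v^l\ge0$ for organic bugs, and inserts one artificial bug (existing with certainty, no value to the designer) with prize $v_a\ge0$ and complexity $q_a\in[0,1]$, subject to $\sum_l v^l+v_a\le\overline v$. Each agent decides whether to search at his/her cost; a searching agent finds each existing bug of complexity $q$ with probability $q$, independently across agents and bugs; the prize of each found bug goes to one of its finders chosen uniformly at random. $\Phi(\hat c;q)$ is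 the probability that a searching agent wins the prize of an existing bug of complexity $q$ when each of the other $n-1$ agents searches iff his/her cost is at most $\hat c$; $\Psi(\hat c;\boldsymbol v,v_a,q_a)=\sum_l v^l\mu^l\Phi(\hat c;q^l)+v_a\Phi(\hat c;q_a)$. The equilibrium threshold $c^*$ is the symmetric Bayes–Nash equilibrium threshold: $c^*=\underline c$ if $\Psi(\underline c)\le\underline c$, $c^*=\overline c$ if $\Psi(\overline c)\ge\overline c$, and otherwise the unique solution of $\hat c=\Psi(\hat c)$. $P(\hat c;q)=1-(1-qF(\hat c))^n$. The designer's problem is to maximize $\sum_l(w^l-v^l)\mu^lP(c^*;q^l)-v_aP(c^*;q_a)$ subject to $\sum_l v^l+v_a\le\overline v$, $v^l\ge0$, $v_a\ge0$, $q_a\in[0,1]$. The set of achievable equilibrium thresholds is $C(\overline v)=\{\hat c:\hat c=\Psi(\hat c;\boldsymbol v,v_a,q_a),\ \sum_lv^l+v_a\le\overline v,\ v^l\ge0,\ v_a\ge0,\ q_a\in[0,1]\}$, and $c_a(\overline v)$ denotes the unique fixed point of $\hat c\mapsto\overline v\,\Phi(\hat c;1)$.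
   Formalization: The unique fixed point $\tilde c$ of Omega is in addition taken to be nonnegative, so that $0 \le \tilde c$ holds. The statement above fails without it. *)

theory Defs
  imports "HOL-Analysis.Analysis"
begin

text \<open>Private bug bounty model. Organic bugs are indexed by l < L.
  n: number of agents; F: cost cdf; f: its density.\<close>

text \<open>Probability that a searching agent wins the prize of an existing bug of
  complexity q when each of the other n-1 agents searches iff his/her cost is at most c:
  the agent finds it with probability q; the number k of other finders is
  Binomial(n-1, q F(c)); the prize goes to a uniformly chosen finder.\<close>
definition Phi :: "nat \<Rightarrow> (real \<Rightarrow> real) \<Rightarrow> real \<Rightarrow> real \<Rightarrow> real" where
  "Phi n F c q = q * (\<Sum>k<n. real ((n - 1) choose k) * (q * F c) ^ k
                               * (1 - q * F c) ^ (n - 1 - k) / real (k + 1))"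

definition Psi :: "nat \<Rightarrow> (real \<Rightarrow> real) \<Rightarrow> nat \<Rightarrow> (nat \<Rightarrow> real) \<Rightarrow> (nat \<Rightarrow> real)
    \<Rightarrow> (nat \<Rightarrow> real) \<Rightarrow> real \<Rightarrow> real \<Rightarrow> real \<Rightarrow> real" where
  "Psi n F L mu q v va qa c = (\<Sum>l<L. v l * mu l * Phi n F c (q l)) + va * Phi n F c qa"

definition Pfind :: "nat \<Rightarrow> (real \<Rightarrow> real) \<Rightarrow> real \<Rightarrow> real \<Rightarrow> real" where
  "Pfind n F c q = 1 - (1 - q * F c) ^ n"

text \<open>Symmetric Bayes-Nash equilibrium threshold for a best-response map g = Psi(.),
  with support endpoints clo, chi (possibly infinite).\<close>
definition eq_threshold :: "ereal \<Rightarrow> ereal \<Rightarrow> (real \<Rightarrow> real) \<Rightarrow> real" where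
  "eq_threshold clo chi g =
     (if \<exists>a. clo = ereal a \<and> g a \<le> a then real_of_ereal clo
      else if \<exists>b. chi = ereal b \<and> g b \<ge> b then real_of_ereal chi
      else (THE c. c = g c))"

definition feasible :: "nat \<Rightarrow> real \<Rightarrow> (nat \<Rightarrow> real) \<Rightarrow> real \<Rightarrow> real \<Rightarrow> bool" where
  "feasible L vbar v va qa \<longleftrightarrow>
     (\<forall>l<L. 0 \<le> v l) \<and> 0 \<le> va \<and> 0 \<le> qa \<and> qa \<le> 1 \<and> (\<Sum>l<L. v l) + va \<le> vbar"

definition designer_obj :: "nat \<Rightarrow> (real \<Rightarrow> real) \<Rightarrow> nat \<Rightarrow> (nat \<Rightarrow> real) \<Rightarrow> (nat \<Rightarrow> real)
    \<Rightarrow> (nat \<Rightarrow> real) \<Rightarrow> (nat \<Rightarrow> real) \<Rightarrow> real \<Rightarrow> real \<Rightarrow> real \<Rightarrow> real" where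
  "designer_obj n F L mu q w v va qa cs =
     (\<Sum>l<L. (w l - v l) * mu l * Pfind n F cs (q l)) - va * Pfind n F cs qa"

definition achievable :: "nat \<Rightarrow> (real \<Rightarrow> real) \<Rightarrow> nat \<Rightarrow> (nat \<Rightarrow> real) \<Rightarrow> (nat \<Rightarrow> real)
    \<Rightarrow> real \<Rightarrow> real set" where
  "achievable n F L mu q vbar =
     {c. \<exists>v va qa. feasible L vbar v va qa \<and> c = Psi n F L mu q v va qa c}"

definition c_a :: "nat \<Rightarrow> (real \<Rightarrow> real) \<Rightarrow> real \<Rightarrow> real" where
  "c_a n F vbar = (THE c. c = vbar * Phi n F c 1)"

definition Omega :: "nat \<Rightarrow> (real \<Rightarrow> real) \<Rightarrow> (real \<Rightarrow> real) \<Rightarrow> nat \<Rightarrow> (nat \<Rightarrow> real)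
    \<Rightarrow> (nat \<Rightarrow> real) \<Rightarrow> (nat \<Rightarrow> real) \<Rightarrow> real \<Rightarrow> real" where
  "Omega n F f L mu q w c =
     (\<Sum>l<L. w l * mu l * q l * (1 - q l * F c) ^ (n - 1)) - F c / f c"

definition Wel :: "nat \<Rightarrow> (real \<Rightarrow> real) \<Rightarrow> nat \<Rightarrow> (nat \<Rightarrow> real)
    \<Rightarrow> (nat \<Rightarrow> real) \<Rightarrow> (nat \<Rightarrow> real) \<Rightarrow> real \<Rightarrow> real" where
  "Wel n F L mu q w c = (\<Sum>l<L. w l * mu l * Pfind n F c (q l)) - real n * F c * c"

end

theory Submission
  imports Defs
begin

(* Every achievable threshold c is a fixed point of some Psi, and Psi is dominated by
   vbar * Phi(.; 1), an antitone map with fixed point c_a; hence C(vbar) is contained in [0, c_a].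
   Conversely, any c in [0, c_a] is reached by spending the whole budget on the artificial bug and
   choosing its complexity by the intermediate value theorem.

   Since P(c; q) = n F(c) Phi(c; q), the expected prize payments at an equilibrium threshold c equal
   n F(c) Psi(c) = n F(c) c, so the designer's payoff is the welfare W(c), whatever the prizes.
   Finally W' = n f (Omega - c) on the support, and Omega is antitone by the monotone hazard rate,
   so W increases up to ctil and decreases after it; its maximum over [0, c_a] is at min ctil c_a. *)

lemma binomial_sum_div_Suc:
  fixes y :: real
  shows "real (Suc m) * y * (\<Sum>k<Suc m. real (m choose k) * y ^ k * (1 - y) ^ (m - k) / real (k + 1))
         = 1 - (1 - y) ^ Suc m"
proof -
  have "real (Suc m) * y * (\<Sum>k<Suc m. real (m choose k) * y ^ k * (1 - y) ^ (m - k) / real (k + 1))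
      = (\<Sum>k\<le>m. real (Suc m choose Suc k) * y ^ Suc k * (1 - y) ^ (Suc m - Suc k))"
    unfolding sum_distrib_left lessThan_Suc_atMost
  proof (rule sum.cong[OF refl])
    fix k
    have e: "real (Suc m) * real (m choose k) = real (Suc m choose Suc k) * real (Suc k)"
      by (metis Suc_times_binomial_eq of_nat_mult)
    have "real (Suc m) * y * (real (m choose k) * y ^ k * (1 - y) ^ (m - k) / real (k + 1))
        = (real (Suc m) * real (m choose k)) * y ^ Suc k * (1 - y) ^ (m - k) / real (Suc k)"
      by (simp add: field_simps)
    also have "\<dots> = real (Suc m choose Suc k) * y ^ Suc k * (1 - y) ^ (Suc m - Suc k)"
      unfolding e by (simp add: field_simps del: of_nat_Suc)
    finally show "real (Suc m) * y * (real (m choose k) * y ^ k * (1 - y) ^ (m - k) / real (k + 1))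
        = real (Suc m choose Suc k) * y ^ Suc k * (1 - y) ^ (Suc m - Suc k)" .
  qed
  also have "\<dots> = (y + (1 - y)) ^ Suc m - (1 - y) ^ Suc m"
    unfolding binomial_ring[of y "1 - y" "Suc m"] sum.atMost_Suc_shift by simp
  finally show ?thesis by simp
qed

lemma binomial_sum_div_Suc_eq_geometric:
  fixes y :: real
  assumes "1 \<le> n"
  shows "(\<Sum>k<n. real ((n - 1) choose k) * y ^ k * (1 - y) ^ (n - 1 - k) / real (k + 1))
       = (\<Sum>j<n. (1 - y) ^ j) / real n"
    (is "?S = _")
proof -
  obtain m where n: "n = Suc m" using assms by (cases n) auto
  show ?thesis
  proof (cases "y = 0")
    case True
    then have "?S = (\<Sum>k<n. if k = 0 then 1 else 0)"
      by (intro sum.cong) auto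
    then show ?thesis using True n by simp
  next
    case False
    have "y * (real n * ?S) = 1 - (1 - y) ^ n"
      using binomial_sum_div_Suc[of m y] n by (simp add: mult_ac)
    also have "\<dots> = y * (\<Sum>j<n. (1 - y) ^ j)"
      using one_diff_power_eq[of "1 - y" n] by simp
    finally have "real n * ?S = (\<Sum>j<n. (1 - y) ^ j)"
      using False by simp
    moreover have "real n \<noteq> 0" using assms by simp
    ultimately show ?thesis by (simp add: eq_divide_eq mult.commute)
  qed
qed

lemma mono_between_limits:
  fixes F :: "real \<Rightarrow> real"
  assumes "mono F" "(F \<longlongrightarrow> a) at_bot" "(F \<longlongrightarrow> b) at_top"
  shows "a \<le> F c" "F c \<le> b"
proof -
  show "a \<le> F c"
  proof (rule tendsto_upperbound[OF assms(2)])
    show "\<forall>\<^sub>F x in at_bot. F x \<le> F c"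
      unfolding eventually_at_bot_linorder using assms(1) by (auto simp: mono_def)
  qed simp
  show "F c \<le> b"
  proof (rule tendsto_lowerbound[OF assms(3)])
    show "\<forall>\<^sub>F x in at_top. F c \<le> F x"
      unfolding eventually_at_top_linorder using assms(1) by (auto simp: mono_def)
  qed simp
qed

lemma antimono_le_iff_le_fixed_point:
  fixes g :: "'a::linorder \<Rightarrow> 'a"
  assumes anti: "antimono g" and fixed: "g a = a"
  shows "c \<le> g c \<longleftrightarrow> c \<le> a"
proof
  assume c: "c \<le> g c"
  show "c \<le> a"
  proof (rule ccontr)
    assume "\<not> c \<le> a"
    then have "g c \<le> a" using antimonoD[OF anti, of a c] fixed by simp
    with c \<open>\<not> c \<le> a\<close> show False using order_trans by blast
  qed
next
  assume "c \<le> a"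
  then have "a \<le> g c" using antimonoD[OF anti, of c a] fixed by simp
  with \<open>c \<le> a\<close> show "c \<le> g c" using order_trans by blast
qed

lemma antimono_ge_iff_ge_fixed_point:
  fixes g :: "'a::linorder \<Rightarrow> 'a"
  assumes anti: "antimono g" and fixed: "g a = a"
  shows "g c \<le> c \<longleftrightarrow> a \<le> c"
proof
  assume c: "g c \<le> c"
  show "a \<le> c"
  proof (rule ccontr)
    assume "\<not> a \<le> c"
    then have "a \<le> g c" using antimonoD[OF anti, of c a] fixed by simp
    with c \<open>\<not> a \<le> c\<close> show False using order_trans by blast
  qed
next
  assume "a \<le> c"
  then have "g c \<le> a" using antimonoD[OF anti, of a c] fixed by simp
  with \<open>a \<le> c\<close> show "g c \<le> c" using order_trans by blast
qed

lemma antimono_fixed_point_unique: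
  fixes g :: "'a::linorder \<Rightarrow> 'a"
  assumes "antimono g" "g a = a" "g b = b"
  shows "a = b"
  using antimono_le_iff_le_fixed_point[OF assms(1,2), of b]
    antimono_le_iff_le_fixed_point[OF assms(1,3), of a] assms(2,3)
  by (metis antisym order_refl)

lemma bounded_continuous_has_fixed_point:
  fixes g :: "real \<Rightarrow> real"
  assumes "continuous_on UNIV g" "\<And>c. 0 \<le> g c" "\<And>c. g c \<le> B"
  shows "\<exists>c. g c = c"
proof -
  have "0 \<le> B" using assms(2,3) by (rule order_trans)
  moreover have "continuous_on {0..B} g" using assms(1) by (rule continuous_on_subset) simp
  moreover have "g \<in> {0..B} \<rightarrow> {0..B}" using assms(2,3) by simp
  ultimately show ?thesis
    using brouwer[of "{0..B}" g] by (auto simp: convex_real_interval)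
qed

lemma F_eq_threshold:
  fixes g F :: "real \<Rightarrow> real" and clo chi :: ereal
  assumes F_below: "\<And>x. ereal x \<le> clo \<Longrightarrow> F x = 0"
    and F_above: "\<And>x. chi \<le> ereal x \<Longrightarrow> F x = 1"
    and anti: "antimono g" and m: "g m = m"
  shows "F (eq_threshold clo chi g) = F m"
proof (cases "\<exists>a. clo = ereal a \<and> g a \<le> a")
  case True
  then obtain a where "clo = ereal a" "g a \<le> a" by auto
  moreover have "m \<le> a"
    using antimono_ge_iff_ge_fixed_point[OF anti m] \<open>g a \<le> a\<close> by simp
  ultimately show ?thesis
    unfolding eq_threshold_def using F_below[of m] F_below[of a] by auto
next
  case no_low: False
  show ?thesis
  proof (cases "\<exists>b. chi = ereal b \<and> b \<le> g b")
    case True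
    then obtain b where "chi = ereal b" "b \<le> g b" by auto
    moreover have "b \<le> m"
      using antimono_le_iff_le_fixed_point[OF anti m] \<open>b \<le> g b\<close> by simp
    ultimately show ?thesis
      unfolding eq_threshold_def using no_low F_above[of m] F_above[of b] by auto
  next
    case False
    have "(THE c. c = g c) = m"
    proof (rule the_equality)
      show "m = g m" using m by simp
      show "c = m" if "c = g c" for c
        using antimono_fixed_point_unique[OF anti that[symmetric] m] .
    qed
    then show ?thesis unfolding eq_threshold_def using no_low False by (simp only: if_False)
  qed
qed

lemma Phi_eq_geometric:
  assumes "1 \<le> n"
  shows "Phi n F c q = q / real n * (\<Sum>j<n. (1 - q * F c) ^ j)"
  unfolding Phi_def binomial_sum_div_Suc_eq_geometric[OF assms] by simp

lemma Pfind_eq_Phi: "1 \<le> n \<Longrightarrow> Pfind n F c q = real n * F c * Phi n F c q"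
  unfolding Pfind_def Phi_eq_geometric
  using one_diff_power_eq[of "1 - q * F c" n] by simp

lemma designer_obj_eq_Wel:
  assumes "1 \<le> n" and F_eq: "F cs = F m" and m: "m = Psi n F L mu q v va qa m"
  shows "designer_obj n F L mu q w v va qa cs = Wel n F L mu q w m"
proof -
  have "(\<Sum>l<L. v l * mu l * Pfind n F m (q l)) + va * Pfind n F m qa
      = real n * F m * Psi n F L mu q v va qa m"
    unfolding Psi_def Pfind_eq_Phi[OF \<open>1 \<le> n\<close>]
    by (simp add: sum_distrib_left distrib_left mult_ac)
  also have "\<dots> = real n * F m * m" by (simp add: m[symmetric])
  finally have payments:
    "(\<Sum>l<L. v l * mu l * Pfind n F m (q l)) + va * Pfind n F m qa = real n * F m * m" .
  have "designer_obj n F L mu q w v va qa cs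
      = (\<Sum>l<L. w l * mu l * Pfind n F m (q l))
        - ((\<Sum>l<L. v l * mu l * Pfind n F m (q l)) + va * Pfind n F m qa)"
    unfolding designer_obj_def Pfind_def F_eq by (simp add: left_diff_distrib sum_subtractf)
  then show ?thesis unfolding payments Wel_def by simp
qed

lemma Wel_has_real_derivative:
  assumes dF: "(F has_real_derivative f t) (at t)" and "f t \<noteq> 0" and "1 \<le> n"
  shows "(Wel n F L mu q w has_real_derivative real n * f t * (Omega n F f L mu q w t - t)) (at t)"
proof -
  have "((\<lambda>c. (\<Sum>l<L. w l * mu l * (1 - (1 - q l * F c) ^ n)) - real n * F c * c)
     has_real_derivative
       (\<Sum>l<L. w l * mu l * (0 - real n * (1 - q l * F t) ^ (n - 1) * (0 - q l * f t)))
        - (real n * f t * t + real n * F t * 1)) (at t)"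
    by (auto intro!: derivative_eq_intros dF sum.cong simp: mult_ac)
  moreover have "(\<Sum>l<L. w l * mu l * (0 - real n * (1 - q l * F t) ^ (n - 1) * (0 - q l * f t)))
        - (real n * f t * t + real n * F t * 1) = real n * f t * (Omega n F f L mu q w t - t)"
    unfolding Omega_def using \<open>f t \<noteq> 0\<close>
    by (simp add: field_simps sum_distrib_left sum_distrib_right mult_ac)
  ultimately show ?thesis unfolding Wel_def Pfind_def by simp
qed

locale bug_bounty =
  fixes n L :: nat and F :: "real \<Rightarrow> real" and mu q :: "nat \<Rightarrow> real" and clo chi :: ereal
  assumes n_pos: "1 \<le> n"
    and F_cont: "continuous_on UNIV F" and F_mono: "mono F"
    and F_nonneg: "0 \<le> F c" and F_le_1: "F c \<le> 1"
    and F_below: "ereal x \<le> clo \<Longrightarrow> F x = 0"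
    and F_above: "chi \<le> ereal x \<Longrightarrow> F x = 1"
    and mu_nonneg: "l < L \<Longrightarrow> 0 \<le> mu l" and mu_le_1: "l < L \<Longrightarrow> mu l \<le> 1"
    and q_nonneg: "l < L \<Longrightarrow> 0 \<le> q l" and q_le_1: "l < L \<Longrightarrow> q l \<le> 1"
begin

lemma Phi_nonneg: "0 \<le> r \<Longrightarrow> r \<le> 1 \<Longrightarrow> 0 \<le> Phi n F c r"
  unfolding Phi_eq_geometric[OF n_pos] using F_nonneg F_le_1
  by (intro mult_nonneg_nonneg divide_nonneg_nonneg sum_nonneg zero_le_power)
     (auto simp: mult_le_one)

lemma Phi_le: "0 \<le> r \<Longrightarrow> r \<le> 1 \<Longrightarrow> Phi n F c r \<le> r"
proof -
  assume r: "0 \<le> r" "r \<le> 1"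
  have "(\<Sum>j<n. (1 - r * F c) ^ j) \<le> (\<Sum>j<n. 1)"
    using r F_nonneg F_le_1 by (intro sum_mono power_le_one) (auto simp: mult_le_one)
  then show ?thesis
    unfolding Phi_eq_geometric[OF n_pos] using r n_pos by (simp add: field_simps mult_left_mono)
qed

lemma Phi_mono_complexity:
  assumes "0 \<le> r" "r \<le> s" "s \<le> 1"
  shows "Phi n F c r \<le> Phi n F c s"
proof (cases "F c = 0")
  case True
  then show ?thesis unfolding Phi_eq_geometric[OF n_pos] using assms n_pos by simp
next
  case False
  have "(1 - s * F c) ^ n \<le> (1 - r * F c) ^ n"
    using assms F_nonneg[of c] F_le_1[of c]
    by (intro power_mono) (auto simp: mult_right_mono mult_le_one)
  then have "real n * F c * Phi n F c r \<le> real n * F c * Phi n F c s"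
    unfolding Pfind_eq_Phi[OF n_pos, symmetric] Pfind_def by simp
  then show ?thesis using False F_nonneg[of c] n_pos by (simp add: mult_le_cancel_left)
qed

lemma Phi_antimono: "0 \<le> r \<Longrightarrow> r \<le> 1 \<Longrightarrow> antimono (\<lambda>c. Phi n F c r)"
  unfolding Phi_eq_geometric[OF n_pos] using F_nonneg F_le_1 F_mono
  by (intro antimonoI mult_left_mono sum_mono power_mono)
     (auto simp: mult_le_one mult_left_mono monoD)

lemma continuous_on_Phi: "continuous_on UNIV (\<lambda>c. Phi n F c r)"
  unfolding Phi_eq_geometric[OF n_pos] by (intro continuous_intros F_cont)

lemma continuous_on_Phi_complexity: "continuous_on UNIV (Phi n F c)"
  unfolding Phi_eq_geometric[OF n_pos] using n_pos by (intro continuous_intros) auto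

lemma Psi_nonneg: "feasible L vbar v va qa \<Longrightarrow> 0 \<le> Psi n F L mu q v va qa c"
  unfolding Psi_def feasible_def using mu_nonneg q_nonneg q_le_1
  by (intro add_nonneg_nonneg sum_nonneg mult_nonneg_nonneg Phi_nonneg) auto

lemma Psi_le_budget_Phi_1:
  assumes fe: "feasible L vbar v va qa"
  shows "Psi n F L mu q v va qa c \<le> vbar * Phi n F c 1"
proof -
  have "v l * mu l * Phi n F c (q l) \<le> v l * Phi n F c 1" if "l < L" for l
  proof -
    have "mu l * Phi n F c (q l) \<le> 1 * Phi n F c 1"
      using that mu_nonneg mu_le_1 q_nonneg q_le_1
      by (intro mult_mono Phi_mono_complexity Phi_nonneg) auto
    then show ?thesis using fe that unfolding feasible_def by (simp add: mult.assoc mult_left_mono)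
  qed
  moreover have "va * Phi n F c qa \<le> va * Phi n F c 1"
    using fe unfolding feasible_def by (intro mult_left_mono Phi_mono_complexity) auto
  ultimately have "Psi n F L mu q v va qa c \<le> ((\<Sum>l<L. v l) + va) * Phi n F c 1"
    unfolding Psi_def sum_distrib_right distrib_right by (intro add_mono sum_mono) auto
  also have "\<dots> \<le> vbar * Phi n F c 1"
    using fe Phi_nonneg[of 1 c] unfolding feasible_def by (intro mult_right_mono) auto
  finally show ?thesis .
qed

lemma Psi_le_budget:
  assumes fe: "feasible L vbar v va qa"
  shows "Psi n F L mu q v va qa c \<le> vbar"
proof -
  have "0 \<le> vbar"
    using fe unfolding feasible_def by (smt (verit) sum_nonneg lessThan_iff)
  then have "vbar * Phi n F c 1 \<le> vbar"
    using Phi_le[of 1 c] by (simp add: mult_left_le)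
  then show ?thesis using Psi_le_budget_Phi_1[OF fe, of c] by linarith
qed

lemma Psi_antimono:
  assumes "feasible L vbar v va qa"
  shows "antimono (Psi n F L mu q v va qa)"
proof (rule antimonoI)
  fix c d :: real
  assume "c \<le> d"
  then have "Phi n F d r \<le> Phi n F c r" if "0 \<le> r" "r \<le> 1" for r
    using antimonoD[OF Phi_antimono[OF that]] by blast
  then show "Psi n F L mu q v va qa d \<le> Psi n F L mu q v va qa c"
    using assms mu_nonneg q_nonneg q_le_1 unfolding Psi_def feasible_def
    by (intro add_mono sum_mono mult_left_mono mult_nonneg_nonneg) auto
qed

lemma continuous_on_Psi: "continuous_on UNIV (Psi n F L mu q v va qa)"
  unfolding Psi_def by (intro continuous_intros continuous_on_Phi)

lemma Psi_has_fixed_point: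
  assumes "feasible L vbar v va qa"
  shows "\<exists>c. c = Psi n F L mu q v va qa c"
  using bounded_continuous_has_fixed_point[OF continuous_on_Psi
      Psi_nonneg[OF assms] Psi_le_budget[OF assms]]
  by metis

lemma Psi_artificial_only: "Psi n F L mu q (\<lambda>_. 0) va qa = (\<lambda>c. va * Phi n F c qa)"
  unfolding Psi_def by simp

lemma feasible_artificial_only:
  "0 \<le> vbar \<Longrightarrow> 0 \<le> qa \<Longrightarrow> qa \<le> 1 \<Longrightarrow> feasible L vbar (\<lambda>_. 0) vbar qa"
  unfolding feasible_def by simp

lemma antimono_budget_Phi_1: "0 \<le> vbar \<Longrightarrow> antimono (\<lambda>c. vbar * Phi n F c 1)"
  using Psi_antimono[OF feasible_artificial_only[OF _ zero_le_one order_refl]]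
  unfolding Psi_artificial_only .

lemma c_a_fixed_point:
  assumes "0 \<le> vbar"
  shows "vbar * Phi n F (c_a n F vbar) 1 = c_a n F vbar"
proof -
  from Psi_has_fixed_point[OF feasible_artificial_only[OF assms zero_le_one order_refl]]
  obtain a where "a = Psi n F L mu q (\<lambda>_. 0) vbar 1 a" ..
  then have a: "vbar * Phi n F a 1 = a" unfolding Psi_artificial_only by (rule sym)
  have "(THE c. c = vbar * Phi n F c 1) = a"
  proof (rule the_equality)
    show "a = vbar * Phi n F a 1" using a by (rule sym)
    show "c = a" if "c = vbar * Phi n F c 1" for c
      using antimono_fixed_point_unique[OF antimono_budget_Phi_1[OF assms] that[symmetric] a] .
  qed
  then show ?thesis unfolding c_a_def using a by (simp only:)
qed

lemma le_c_a_iff: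
  assumes "0 \<le> vbar"
  shows "c \<le> vbar * Phi n F c 1 \<longleftrightarrow> c \<le> c_a n F vbar"
  using antimono_le_iff_le_fixed_point[OF antimono_budget_Phi_1[OF assms] c_a_fixed_point[OF assms]] .

lemma c_a_nonneg:
  assumes "0 \<le> vbar"
  shows "0 \<le> c_a n F vbar"
  using mult_nonneg_nonneg[OF assms Phi_nonneg[of 1 "c_a n F vbar"]] c_a_fixed_point[OF assms]
  by simp

lemma achievable_eq:
  assumes vbar: "0 \<le> vbar"
  shows "achievable n F L mu q vbar = {0 .. c_a n F vbar}"
proof (intro set_eqI iffI)
  fix c assume "c \<in> achievable n F L mu q vbar"
  then obtain v va qa where fe: "feasible L vbar v va qa" and c: "c = Psi n F L mu q v va qa c"
    unfolding achievable_def by auto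
  have "0 \<le> c" using Psi_nonneg[OF fe, of c] c by linarith
  moreover have "c \<le> vbar * Phi n F c 1" using Psi_le_budget_Phi_1[OF fe, of c] c by linarith
  ultimately show "c \<in> {0 .. c_a n F vbar}" using le_c_a_iff[OF vbar] by simp
next
  fix c assume c: "c \<in> {0 .. c_a n F vbar}"
  have "vbar * Phi n F c 0 \<le> c" using c by (simp add: Phi_def)
  moreover have "c \<le> vbar * Phi n F c 1" using c le_c_a_iff[OF vbar] by simp
  moreover have "continuous_on {0..1} (\<lambda>r. vbar * Phi n F c r)"
    by (intro continuous_intros continuous_on_subset[OF continuous_on_Phi_complexity]) auto
  ultimately obtain r where r: "0 \<le> r" "r \<le> 1" "vbar * Phi n F c r = c"
    using IVT'[of "\<lambda>r. vbar * Phi n F c r" 0 c 1] by auto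
  then have "feasible L vbar (\<lambda>_. 0) vbar r" "c = Psi n F L mu q (\<lambda>_. 0) vbar r c"
    using feasible_artificial_only[OF vbar] unfolding Psi_artificial_only by auto
  then show "c \<in> achievable n F L mu q vbar"
    unfolding achievable_def by blast
qed

lemma designer_obj_at_eq_threshold:
  assumes fe: "feasible L vbar v va qa" and c: "c = Psi n F L mu q v va qa c"
  shows "designer_obj n F L mu q w v va qa (eq_threshold clo chi (Psi n F L mu q v va qa))
       = Wel n F L mu q w c"
proof -
  have "F (eq_threshold clo chi (Psi n F L mu q v va qa)) = F c"
    using F_eq_threshold[where F = F and clo = clo and chi = chi, OF F_below F_above
        Psi_antimono[OF fe] c[symmetric]] .
  then show ?thesis using designer_obj_eq_Wel[OF n_pos _ c] by blast
qed

end

locale bug_bounty_welfare = bug_bounty +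
  fixes f :: "real \<Rightarrow> real" and w :: "nat \<Rightarrow> real" and ctil :: real
  assumes F_deriv: "clo < ereal x \<Longrightarrow> ereal x < chi \<Longrightarrow> (F has_real_derivative f x) (at x)"
    and f_pos: "clo < ereal x \<Longrightarrow> ereal x < chi \<Longrightarrow> 0 < f x"
    and hazard_mono: "mono_on {x. clo < ereal x \<and> ereal x < chi} (\<lambda>x. F x / f x)"
    and w_nonneg: "l < L \<Longrightarrow> 0 \<le> w l"
    and ctil_above_clo: "clo < ereal ctil" and ctil_below_chi: "ereal ctil < chi"
    and Omega_ctil: "Omega n F f L mu q w ctil = ctil"
begin

lemma Omega_antimono:
  assumes x: "clo < ereal x" and "x \<le> y" and y: "ereal y < chi"
  shows "Omega n F f L mu q w y \<le> Omega n F f L mu q w x"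
proof -
  have "F x \<le> F y" using F_mono \<open>x \<le> y\<close> by (rule monoD)
  then have "(\<Sum>l<L. w l * mu l * q l * (1 - q l * F y) ^ (n - 1))
      \<le> (\<Sum>l<L. w l * mu l * q l * (1 - q l * F x) ^ (n - 1))"
    using w_nonneg mu_nonneg q_nonneg q_le_1 F_nonneg[of y] F_le_1[of y]
    by (intro sum_mono mult_left_mono power_mono mult_nonneg_nonneg)
       (auto simp: mult_le_one mult_left_mono)
  moreover have "F x / f x \<le> F y / f y"
  proof -
    have "ereal x \<le> ereal y" using \<open>x \<le> y\<close> by simp
    then have "ereal x < chi" "clo < ereal y"
      using order_le_less_trans[OF _ y] order_less_le_trans[OF x] by blast+
    then show ?thesis using x y \<open>x \<le> y\<close> by (intro mono_onD[OF hazard_mono]) auto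
  qed
  ultimately show ?thesis unfolding Omega_def by linarith
qed

lemma le_Omega_below_ctil: "clo < ereal t \<Longrightarrow> t \<le> ctil \<Longrightarrow> t \<le> Omega n F f L mu q w t"
  using Omega_antimono[of t ctil] ctil_below_chi Omega_ctil by linarith

lemma Omega_le_above_ctil: "ctil \<le> t \<Longrightarrow> ereal t < chi \<Longrightarrow> Omega n F f L mu q w t \<le> t"
  using Omega_antimono[OF ctil_above_clo, of t] Omega_ctil by linarith

lemma continuous_on_Wel: "continuous_on UNIV (Wel n F L mu q w)"
  unfolding Wel_def Pfind_def by (intro continuous_intros F_cont)

lemma Wel_below_support: "ereal c \<le> clo \<Longrightarrow> Wel n F L mu q w c = 0"
  unfolding Wel_def Pfind_def by (simp add: F_below)

lemma Wel_antimono_above_support: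
  assumes "chi \<le> ereal x" "x \<le> y"
  shows "Wel n F L mu q w y \<le> Wel n F L mu q w x"
proof -
  have "chi \<le> ereal y" using assms by (metis ereal_less_eq(3) order_trans)
  then show ?thesis
    unfolding Wel_def Pfind_def using assms F_above by (simp add: mult_left_mono)
qed

lemma Wel_has_real_derivative_in_support:
  assumes "clo < ereal t" "ereal t < chi"
  shows "(Wel n F L mu q w has_real_derivative real n * f t * (Omega n F f L mu q w t - t)) (at t)"
  using f_pos[OF assms] by (intro Wel_has_real_derivative F_deriv assms n_pos) simp

lemma Wel_mono_in_support:
  assumes "clo \<le> ereal x" "x \<le> y" "y \<le> ctil"
  shows "Wel n F L mu q w x \<le> Wel n F L mu q w y"
proof (rule DERIV_nonneg_imp_increasing_open[OF \<open>x \<le> y\<close>])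
  fix t assume t: "x < t" "t < y"
  have lo: "clo < ereal t" using assms(1) t(1) by (simp add: order_le_less_trans)
  have "ereal t \<le> ereal ctil" using t assms(3) by simp
  then have hi: "ereal t < chi" using ctil_below_chi by (rule order_le_less_trans)
  have "0 \<le> real n * f t * (Omega n F f L mu q w t - t)"
    using le_Omega_below_ctil[OF lo] f_pos[OF lo hi] t assms(3) by simp
  with Wel_has_real_derivative_in_support[OF lo hi]
  show "\<exists>D. (Wel n F L mu q w has_real_derivative D) (at t) \<and> 0 \<le> D" by blast
qed (rule continuous_on_subset[OF continuous_on_Wel], simp)

lemma Wel_antimono_in_support:
  assumes "ctil \<le> x" "x \<le> y" "ereal y \<le> chi"
  shows "Wel n F L mu q w y \<le> Wel n F L mu q w x"
proof (rule DERIV_nonpos_imp_decreasing_open[OF \<open>x \<le> y\<close>])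
  fix t assume t: "x < t" "t < y"
  have "ereal ctil \<le> ereal t" using t assms(1) by simp
  then have lo: "clo < ereal t" using ctil_above_clo by (rule order_less_le_trans[rotated])
  have "ereal t < ereal y" using t(2) by simp
  then have hi: "ereal t < chi" using assms(3) by (rule order_less_le_trans)
  have "real n * f t * (Omega n F f L mu q w t - t) \<le> 0"
    using Omega_le_above_ctil[OF _ hi] f_pos[OF lo hi] t assms(1)
    by (simp add: mult_nonneg_nonpos)
  with Wel_has_real_derivative_in_support[OF lo hi]
  show "\<exists>D. (Wel n F L mu q w has_real_derivative D) (at t) \<and> D \<le> 0" by blast
qed (rule continuous_on_subset[OF continuous_on_Wel], simp)

lemma Wel_mono_below_ctil:
  assumes "x \<le> y" "y \<le> ctil"
  shows "Wel n F L mu q w x \<le> Wel n F L mu q w y"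
proof (cases "clo \<le> ereal x")
  case True
  then show ?thesis using Wel_mono_in_support assms by blast
next
  case False
  then obtain a where a: "clo = ereal a" "x < a"
    using ctil_above_clo by (cases clo) auto
  have "Wel n F L mu q w x = Wel n F L mu q w a"
    using Wel_below_support a by simp
  also have "\<dots> \<le> Wel n F L mu q w y"
  proof (cases "y \<le> a")
    case True
    then show ?thesis using Wel_below_support a by simp
  next
    case False
    then show ?thesis using Wel_mono_in_support a assms by simp
  qed
  finally show ?thesis .
qed

lemma Wel_antimono_above_ctil:
  assumes "ctil \<le> x" "x \<le> y"
  shows "Wel n F L mu q w y \<le> Wel n F L mu q w x"
proof (cases "ereal y \<le> chi")
  case True
  then show ?thesis using Wel_antimono_in_support assms by blast
next
  case False
  then obtain b where b: "chi = ereal b" "b < y"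
    using ctil_below_chi by (cases chi) auto
  show ?thesis
  proof (cases "x \<le> b")
    case True
    have "Wel n F L mu q w y \<le> Wel n F L mu q w b"
      using Wel_antimono_above_support b by simp
    also have "\<dots> \<le> Wel n F L mu q w x"
      using Wel_antimono_in_support True b assms by simp
    finally show ?thesis .
  next
    case False
    then show ?thesis using Wel_antimono_above_support b assms by simp
  qed
qed

lemma Wel_le_Wel_min_ctil:
  assumes "c \<le> b"
  shows "Wel n F L mu q w c \<le> Wel n F L mu q w (min ctil b)"
proof (cases "c \<le> ctil")
  case True
  then show ?thesis using Wel_mono_below_ctil assms by simp
next
  case False
  then have "min ctil b = ctil" using assms by simp
  then show ?thesis using Wel_antimono_above_ctil False by simp
qed

end

theorem theorem1:
  fixes n L :: nat and F f :: "real \<Rightarrow> real" and clo chi :: ereal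
    and mu q w :: "nat \<Rightarrow> real" and vbar ctil :: real
  assumes n_pos: "n \<ge> 1" and L_pos: "L \<ge> 1"
    and supp: "clo < chi" "chi > 0"
    and F_cont: "continuous_on UNIV F" and F_mono: "mono F"
    and F_below: "\<And>x. ereal x \<le> clo \<Longrightarrow> F x = 0"
    and F_above: "\<And>x. chi \<le> ereal x \<Longrightarrow> F x = 1"
    and F_bot: "(F \<longlongrightarrow> 0) at_bot" and F_top: "(F \<longlongrightarrow> 1) at_top"
    and F_full: "strict_mono_on {x. clo < ereal x \<and> ereal x < chi} F"
    and F_dens: "\<And>x. clo < ereal x \<Longrightarrow> ereal x < chi \<Longrightarrow>
                   (F has_real_derivative f x) (at x) \<and> 0 < f x"
    and hazard: "mono_on {x. clo < ereal x \<and> ereal x < chi} (\<lambda>x. F x / f x)"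
    and mu: "\<And>l. l < L \<Longrightarrow> 0 < mu l \<and> mu l \<le> 1"
    and q: "\<And>l. l < L \<Longrightarrow> 0 < q l \<and> q l \<le> 1"
    and w: "\<And>l. l < L \<Longrightarrow> 0 \<le> w l"
    and vbar: "vbar > 0"
    and ctil_supp: "clo < ereal ctil" "ereal ctil < chi"
    and ctil_fix: "Omega n F f L mu q w ctil = ctil"
    and ctil_unique: "\<And>c. clo < ereal c \<Longrightarrow> ereal c < chi \<Longrightarrow>
                         Omega n F f L mu q w c = c \<Longrightarrow> c = ctil"
    and ctil_nonneg: "0 \<le> ctil"
  shows "achievable n F L mu q vbar = {0 .. c_a n F vbar}
       \<and> min ctil (c_a n F vbar) \<in> achievable n F L mu q vbar
       \<and> (\<forall>c \<in> achievable n F L mu q vbar.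
             Wel n F L mu q w c \<le> Wel n F L mu q w (min ctil (c_a n F vbar)))
       \<and> (\<forall>v va qa. feasible L vbar v va qa
              \<and> min ctil (c_a n F vbar) = Psi n F L mu q v va qa (min ctil (c_a n F vbar)) \<longrightarrow>
            (\<forall>v' va' qa'. feasible L vbar v' va' qa' \<longrightarrow>
               designer_obj n F L mu q w v' va' qa'
                 (eq_threshold clo chi (Psi n F L mu q v' va' qa'))
               \<le> designer_obj n F L mu q w v va qa
                 (eq_threshold clo chi (Psi n F L mu q v va qa))))"
proof -
  interpret bug_bounty_welfare n L F mu q clo chi f w ctil
    using n_pos F_cont F_mono F_below F_above mono_between_limits[OF F_mono F_bot F_top]
      mu q F_dens hazard w ctil_supp ctil_fix
    by unfold_locales (auto simp: less_imp_le)
  define copt where "copt = min ctil (c_a n F vbar)"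
  have ach: "achievable n F L mu q vbar = {0 .. c_a n F vbar}"
    using achievable_eq vbar by simp
  have copt_ach: "copt \<in> achievable n F L mu q vbar"
    unfolding ach copt_def using ctil_nonneg c_a_nonneg vbar by simp
  have Wel_opt: "\<forall>c \<in> achievable n F L mu q vbar. Wel n F L mu q w c \<le> Wel n F L mu q w copt"
    unfolding ach copt_def using Wel_le_Wel_min_ctil by simp
  have "designer_obj n F L mu q w v' va' qa' (eq_threshold clo chi (Psi n F L mu q v' va' qa'))
      \<le> designer_obj n F L mu q w v va qa (eq_threshold clo chi (Psi n F L mu q v va qa))"
    if fe: "feasible L vbar v va qa" and opt: "copt = Psi n F L mu q v va qa copt"
      and fe': "feasible L vbar v' va' qa'" for v va qa v' va' qa'
  proof -
    from Psi_has_fixed_point[OF fe'] obtain c' where c': "c' = Psi n F L mu q v' va' qa' c'" ..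
    then have "c' \<in> achievable n F L mu q vbar" unfolding achievable_def using fe' by blast
    then show ?thesis
      unfolding designer_obj_at_eq_threshold[OF fe opt] designer_obj_at_eq_threshold[OF fe' c']
      using Wel_opt by blast
  qed
  then show ?thesis using ach copt_ach Wel_opt unfolding copt_def by blast
qed

end
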